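(* Let $f^1$ be one of the Gaussian-type smearing functions $f^1_{\rm G}$, $f^1_{{\rm MP},N'}$ (for some $N'\in\mathbb N$) or $f^1_{\rm cs}$ (for some $a\in\mathbb R$). Then $f^1$ extends to an entire function, and there exist $C\ge0$ and $q\ge0$ such that for all $x,y\in\mathbb R$, $$|f^1(x+iy)|\le\begin{cases}C\big(1+(x^2+y^2)^q\big)e^{y^2-x^2}&\text{if }x\ge0,\\ C\big(1+(x^2+y^2)^q\big)\big(1+e^{y^2-x^2}\big)&\text{if }x<0.\end{cases}$$
   Context: $f^1_{\rm G}(x)=\frac12(1-\mathrm{erf}(x))=\frac1{\sqrt\pi}\int_x^\infty e^{-t^2}dt$. Hermite polynomials: $H_0=1$, $H_{n+1}(x)=2xH_n(x)-H_n'(x)$. Methfessel–Paxton: $f^1_{{\rm MP},N'}(x)=f^1_{\rm G}(x)+\sum_{n=1}^{N'}A_nH_{2n-1}(x)e^{-x^2}$ with $A_n=\frac{(-1)^n}{n!4^n\sqrt\pi}$. Cold smearing: $f^1_{\rm cs}(x)=f^1_{\rm G}(x)+\frac1{4\sqrt\pi}(-aH_2(x)+H_1(x))e^{-x^2}$ with a parameter $a\in\mathbb R$. *)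

theory Defs
  imports "HOL-Complex_Analysis.Complex_Analysis" "HOL-Computational_Algebra.Polynomial"
begin

definition fG :: "real \<Rightarrow> real" where
  "fG x = (1 / sqrt pi) * integral {x..} (\<lambda>t. exp (- (t^2)))"

fun hermite :: "nat \<Rightarrow> real poly" where
  "hermite 0 = 1"
| "hermite (Suc n) = [:0, 2:] * hermite n - pderiv (hermite n)"

definition mpA :: "nat \<Rightarrow> real" where
  "mpA n = (-1) ^ n / (fact n * 4 ^ n * sqrt pi)"

definition fMP :: "nat \<Rightarrow> real \<Rightarrow> real" where
  "fMP N x = fG x + (\<Sum>n = 1..N. mpA n * poly (hermite (2 * n - 1)) x * exp (- (x^2)))"

definition fcs :: "real \<Rightarrow> real \<Rightarrow> real" where
  "fcs a x = fG x + 1 / (4 * sqrt pi) * (- a * poly (hermite 2) x + poly (hermite 1) x) * exp (- (x^2))"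

definition gaussian_type_smearing :: "(real \<Rightarrow> real) \<Rightarrow> bool" where
  "gaussian_type_smearing f \<longleftrightarrow> f = fG \<or> (\<exists>N. f = fMP N) \<or> (\<exists>a. f = fcs a)"

end

theory Submission
  imports Defs
begin

text \<open>
  Let g be an entire primitive of exp(-z^2) and I(a) the integral of exp(-t^2) over [a, oo).
  Then tail(z) = I(0) - (g(z) - g(0)) is an entire function extending I, and f_G = I / sqrt pi.
  For z = x + iy with x \<ge> 0, integrate exp(-w^2) along the horizontal segment from z to z + T:
  there |exp(-(z + t)^2)| = exp(y^2 - (x + t)^2) \<le> exp(y^2 - x^2) exp(-t^2), so this piece is at
  most exp(y^2 - x^2) I(0). Closing the contour by the vertical segment from x + T + iy down to
  the real axis costs O(exp(y^2 - T^2)), and I(x + T) tends to 0; letting T go to infinity gives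
  |tail(z)| \<le> exp(y^2 - x^2) I(0). For x < 0 use tail(-z) = 2 I(0) - tail(z), which holds since
  exp(-z^2) is even. The other terms of the smearing functions are polynomials times exp(-z^2),
  and |exp(-z^2)| = exp(y^2 - x^2).
\<close>

lemma norm_exp_minus_square: "norm (exp (- (z^2))) = exp (Im z ^ 2 - Re z ^ 2)"
  by (simp add: power2_eq_square)

lemma gauss_le_exp_linear: "exp (- (t^2)) \<le> exp (1/4) * exp (- t)" for t :: real
proof -
  have "- (t^2) \<le> 1/4 + - t"
    using zero_le_power2[of "t - 1/2"] by (simp add: power2_eq_square algebra_simps)
  then show ?thesis by (simp flip: exp_add)
qed

lemma gauss_integrable_on_atLeast: "(\<lambda>t. exp (- (t^2))) integrable_on {a::real..}"
proof (rule measurable_bounded_by_integrable_imp_integrable_real)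
  show "(\<lambda>t. exp (- (t^2))) \<in> borel_measurable (lebesgue_on {a..})"
    by (rule continuous_imp_measurable_on_sets_lebesgue) (auto intro!: continuous_intros)
  show "(\<lambda>t. exp (1/4) * exp (-1 * t)) integrable_on {a..}"
    using integrable_on_cmult_left[OF integrable_on_exp_minus_to_infinity[of 1 a]] by simp
  show "\<bar>exp (- (t^2))\<bar> \<le> exp (1/4) * exp (-1 * t)" for t :: real
    using gauss_le_exp_linear[of t] by simp
qed auto

lemma gauss_integrable_on_interval: "(\<lambda>t::real. exp (- (t^2))) integrable_on {a..b}"
  by (rule integrable_continuous_interval) (auto intro!: continuous_intros)

definition gauss_tail :: "real \<Rightarrow> real" where
  "gauss_tail a = integral {a..} (\<lambda>t. exp (- (t^2)))"

lemma fG_eq_gauss_tail: "fG x = gauss_tail x / sqrt pi"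
  by (simp add: fG_def gauss_tail_def)

lemma gauss_tail_split:
  assumes "a \<le> b"
  shows "gauss_tail a = integral {a..b} (\<lambda>t. exp (- (t^2))) + gauss_tail b"
proof -
  have "((\<lambda>t. exp (- (t^2))) has_integral integral {a..b} (\<lambda>t. exp (- (t^2))) + gauss_tail b)
          ({a..b} \<union> {b..})"
    unfolding gauss_tail_def
  proof (rule has_integral_Un)
    show "negligible ({a..b} \<inter> {b..})"
      by (rule negligible_subset[of "{b}"]) auto
  qed (auto simp: gauss_integrable_on_atLeast gauss_integrable_on_interval)
  moreover have "{a..b} \<union> {b..} = {a..}" using assms by auto
  ultimately show ?thesis by (simp add: gauss_tail_def integral_unique)
qed

lemma gauss_tail_nonneg: "0 \<le> gauss_tail a"
  unfolding gauss_tail_def by (rule integral_nonneg) (auto simp: gauss_integrable_on_atLeast)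

lemma gauss_tail_le: "gauss_tail a \<le> exp (1/4) * exp (- a)"
proof -
  have "gauss_tail a \<le> integral {a..} (\<lambda>t. exp (1/4) * exp (-1 * t))"
    unfolding gauss_tail_def
    using gauss_integrable_on_atLeast
      integrable_on_cmult_left[OF integrable_on_exp_minus_to_infinity[of 1 a]]
    by (intro integral_le) (auto simp: gauss_le_exp_linear)
  also have "\<dots> = exp (1/4) * exp (- a)"
    using has_integral_cmul[OF has_integral_exp_minus_to_infinity[of 1 a]]
    by (intro integral_unique) simp
  finally show ?thesis .
qed

definition gauss_weight :: "complex \<Rightarrow> real" where
  "gauss_weight z =
     (if 0 \<le> Re z then exp (Im z ^ 2 - Re z ^ 2) else 1 + exp (Im z ^ 2 - Re z ^ 2))"

lemma exp_le_gauss_weight: "exp (Im z ^ 2 - Re z ^ 2) \<le> gauss_weight z"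
  by (simp add: gauss_weight_def)

lemma gauss_weight_nonneg: "0 \<le> gauss_weight z"
  by (simp add: gauss_weight_def add_nonneg_nonneg)

definition has_gaussian_growth :: "(complex \<Rightarrow> complex) \<Rightarrow> bool" where
  "has_gaussian_growth F \<longleftrightarrow>
     (\<exists>C q. 0 \<le> C \<and> 0 \<le> q \<and> (\<forall>z. norm (F z) \<le> C * (1 + norm z powr q) * gauss_weight z))"

locale gauss_primitive =
  fixes g :: "complex \<Rightarrow> complex"
  assumes primitive: "(g has_field_derivative exp (- (z^2))) (at z)"
begin

lemma has_integral_horizontal:
  assumes "a \<le> b"
  shows "((\<lambda>t::real. exp (- ((z + of_real t)^2)))
           has_integral g (z + of_real b) - g (z + of_real a)) {a..b}"
proof -
  have "((\<lambda>w. z + w) has_field_derivative 1) (at w)" for w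
    by (auto intro!: derivative_eq_intros)
  from DERIV_chain2[OF primitive this]
  have "((\<lambda>w. g (z + w)) has_field_derivative exp (- ((z + of_real t)^2))) (at (of_real t))" for t
    by simp
  then have "((\<lambda>t. g (z + of_real t)) has_vector_derivative exp (- ((z + of_real t)^2)))
               (at t within {a..b})" for t
    by (rule has_vector_derivative_real_field)
  then show ?thesis by (rule fundamental_theorem_of_calculus[OF assms])
qed

lemma diff_of_real_eq_integral:
  assumes "a \<le> b"
  shows "g (of_real b) - g (of_real a) = of_real (integral {a..b} (\<lambda>t. exp (- (t^2))))"
proof -
  have "((\<lambda>t. of_real (exp (- (t^2)))) has_integral
          (of_real (integral {a..b} (\<lambda>t. exp (- (t^2)))) :: complex)) {a..b}"
    using has_integral_linear[OF integrable_integral[OF gauss_integrable_on_interval]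
        bounded_linear_of_real]
    by (simp add: o_def)
  moreover have "((\<lambda>t. of_real (exp (- (t^2)))) has_integral g (of_real b) - g (of_real a)) {a..b}"
    using has_integral_horizontal[OF assms, of 0] by (simp flip: exp_of_real)
  ultimately show ?thesis by (rule has_integral_unique[symmetric])
qed

lemma norm_diff_horizontal_le:
  assumes "0 \<le> Re z" "0 \<le> T"
  shows "norm (g (z + of_real T) - g z) \<le> exp (Im z ^ 2 - Re z ^ 2) * gauss_tail 0"
proof -
  have bound: "norm (exp (- ((z + of_real t)^2))) \<le> exp (Im z ^ 2 - Re z ^ 2) * exp (- (t^2))"
    if "t \<in> {0..T}" for t
  proof -
    have "Re z ^ 2 + t^2 \<le> (Re z + t)^2"
      using assms(1) that by (simp add: power2_eq_square algebra_simps)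
    then have "exp (Im z ^ 2 - (Re z + t)^2) \<le> exp (Im z ^ 2 - Re z ^ 2 + - (t^2))"
      by simp
    then show ?thesis
      using norm_exp_minus_square[of "z + of_real t"] by (simp flip: exp_add)
  qed
  note horizontal = has_integral_horizontal[OF assms(2), of z]
  have "norm (g (z + of_real T) - g z) = norm (integral {0..T} (\<lambda>t. exp (- ((z + of_real t)^2))))"
    using horizontal by (simp add: integral_unique)
  also have "\<dots> \<le> integral {0..T} (\<lambda>t. exp (Im z ^ 2 - Re z ^ 2) * exp (- (t^2)))"
    by (rule integral_norm_bound_integral)
       (use horizontal bound gauss_integrable_on_interval in \<open>auto intro: integrable_on_cmult_left\<close>)
  also have "\<dots> = exp (Im z ^ 2 - Re z ^ 2) * integral {0..T} (\<lambda>t. exp (- (t^2)))"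
    by simp
  also have "\<dots> \<le> exp (Im z ^ 2 - Re z ^ 2) * gauss_tail 0"
    using gauss_tail_split[OF assms(2)] gauss_tail_nonneg[of T] by simp
  finally show ?thesis .
qed

lemma norm_diff_vertical_le:
  "norm (g z - g (of_real (Re z))) \<le> exp (Im z ^ 2 - Re z ^ 2) * \<bar>Im z\<bar>"
proof -
  have "norm (exp (- (w^2))) \<le> exp (Im z ^ 2 - Re z ^ 2)"
    if "w \<in> closed_segment (of_real (Re z)) z" for w
  proof -
    from that obtain u where u: "0 \<le> u" "u \<le> 1" "w = (1 - u) *\<^sub>R of_real (Re z) + u *\<^sub>R z"
      unfolding closed_segment_def by auto
    then have "Re w = Re z" "Im w = u * Im z"
      unfolding u(3) by (simp_all add: algebra_simps)
    moreover have "(u * Im z)^2 \<le> Im z ^ 2"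
      using u by (simp add: power_mult_distrib mult_left_le_one_le power_le_one)
    ultimately show ?thesis
      using norm_exp_minus_square[of w] by simp
  qed
  then have "norm (g z - g (of_real (Re z))) \<le> exp (Im z ^ 2 - Re z ^ 2) * norm (z - of_real (Re z))"
    by (intro field_differentiable_bound[OF convex_closed_segment])
       (auto intro: has_field_derivative_at_within primitive)
  also have "norm (z - of_real (Re z)) = \<bar>Im z\<bar>"
    by (simp add: cmod_def)
  finally show ?thesis .
qed

definition tail :: "complex \<Rightarrow> complex" where
  "tail z = of_real (gauss_tail 0) - (g z - g 0)"

lemma holomorphic_tail: "tail holomorphic_on UNIV"
proof -
  have "g holomorphic_on UNIV"
    using primitive by (auto simp: holomorphic_on_def field_differentiable_def)
  then show ?thesis unfolding tail_def by (intro holomorphic_intros)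
qed

lemma tail_of_real: "tail (of_real x) = of_real (gauss_tail x)"
proof (cases "0 \<le> x")
  case True
  then show ?thesis
    using gauss_tail_split[OF True] diff_of_real_eq_integral[OF True] by (simp add: tail_def)
next
  case False
  then have "x \<le> 0" by simp
  then show ?thesis
    using gauss_tail_split[OF \<open>x \<le> 0\<close>] diff_of_real_eq_integral[OF \<open>x \<le> 0\<close>]
    by (simp add: tail_def algebra_simps)
qed

lemma tail_minus: "tail (- z) = 2 * of_real (gauss_tail 0) - tail z"
proof -
  have "((\<lambda>w. g w + g (- w)) has_field_derivative 0) (at w)" for w
  proof -
    have "((\<lambda>w. - w) has_field_derivative -1) (at w)"
      by (auto intro!: derivative_eq_intros)
    from DERIV_add[OF primitive DERIV_chain2[OF primitive this]] show ?thesis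
      by simp
  qed
  then obtain c where "\<forall>w\<in>UNIV. g w + g (- w) = c"
    using has_field_derivative_zero_constant[OF convex_UNIV] by blast
  then have "g z + g (- z) = g 0 + g 0"
    by (metis UNIV_I minus_zero)
  then show ?thesis by (simp add: tail_def algebra_simps)
qed

lemma tail_tendsto_zero: "((\<lambda>T. tail (z + of_real T)) \<longlongrightarrow> 0) at_top"
proof (rule Lim_null_comparison)
  define K where "K = exp (1/4) * exp (- Re z) * (1 + exp (Im z ^ 2) * \<bar>Im z\<bar>)"
  have "norm (tail (z + of_real T)) \<le> K * exp (- T)" for T
  proof -
    define w where "w = z + of_real T"
    have "tail w = tail (of_real (Re w)) + (g (of_real (Re w)) - g w)"
      by (simp add: tail_def algebra_simps)
    then have "tail w = of_real (gauss_tail (Re w)) + (g (of_real (Re w)) - g w)"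
      by (simp only: tail_of_real)
    then have "norm (tail w) \<le> gauss_tail (Re w) + norm (g w - g (of_real (Re w)))"
      using norm_triangle_ineq[of "of_real (gauss_tail (Re w))" "g (of_real (Re w)) - g w"]
        gauss_tail_nonneg[of "Re w"]
      by (simp add: norm_minus_commute)
    also have "\<dots> \<le> exp (1/4) * exp (- Re w) + exp (Im w ^ 2 - Re w ^ 2) * \<bar>Im w\<bar>"
      by (intro add_mono gauss_tail_le norm_diff_vertical_le)
    also have "exp (Im w ^ 2 - Re w ^ 2) = exp (Im w ^ 2) * exp (- (Re w ^ 2))"
      by (simp flip: exp_add)
    also have "\<dots> \<le> exp (Im w ^ 2) * (exp (1/4) * exp (- Re w))"
      by (intro mult_left_mono gauss_le_exp_linear) simp
    also have "exp (1/4) * exp (- Re w) + exp (Im w ^ 2) * (exp (1/4) * exp (- Re w)) * \<bar>Im w\<bar>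
                 = K * exp (- T)"
      by (simp add: K_def w_def algebra_simps flip: exp_add)
    finally show ?thesis
      by (simp add: w_def mult_right_mono)
  qed
  then show "\<forall>\<^sub>F T in at_top. norm (tail (z + of_real T)) \<le> K * exp (- T)"
    by simp
  show "((\<lambda>T. K * exp (- T)) \<longlongrightarrow> 0) at_top"
    by (intro tendsto_mult_right_zero filterlim_compose[OF exp_at_bot filterlim_uminus_at_bot_at_top])
qed

lemma norm_tail_le:
  assumes "0 \<le> Re z"
  shows "norm (tail z) \<le> exp (Im z ^ 2 - Re z ^ 2) * gauss_tail 0"
proof (rule tendsto_le[OF trivial_limit_at_top_linorder])
  let ?B = "exp (Im z ^ 2 - Re z ^ 2) * gauss_tail 0"
  show "((\<lambda>T. ?B + norm (tail (z + of_real T))) \<longlongrightarrow> ?B) at_top"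
    using tendsto_add[OF tendsto_const tendsto_norm_zero[OF tail_tendsto_zero]] by simp
  have "norm (tail z) \<le> ?B + norm (tail (z + of_real T))" if "0 \<le> T" for T
  proof -
    have "tail z = (g (z + of_real T) - g z) + tail (z + of_real T)"
      by (simp add: tail_def)
    then have "norm (tail z) \<le> norm (g (z + of_real T) - g z) + norm (tail (z + of_real T))"
      by (metis norm_triangle_ineq)
    then show ?thesis
      using norm_diff_horizontal_le[OF assms that] by linarith
  qed
  then show "\<forall>\<^sub>F T in at_top. norm (tail z) \<le> ?B + norm (tail (z + of_real T))"
    by (intro eventually_at_top_linorderI)
qed (rule tendsto_const)

lemma norm_tail_le_gauss_weight: "norm (tail z) \<le> 2 * gauss_tail 0 * gauss_weight z"
proof (cases "0 \<le> Re z")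
  case True
  have "0 \<le> exp (Im z ^ 2 - Re z ^ 2) * gauss_tail 0"
    using gauss_tail_nonneg[of 0] by simp
  then show ?thesis
    using norm_tail_le[OF True] True by (simp add: gauss_weight_def algebra_simps)
next
  case False
  have "tail z = 2 * of_real (gauss_tail 0) - tail (- z)"
    using tail_minus[of "- z"] by simp
  then have "norm (tail z) \<le> 2 * gauss_tail 0 + norm (tail (- z))"
    using norm_triangle_ineq4[of "2 * of_real (gauss_tail 0)" "tail (- z)"] gauss_tail_nonneg[of 0]
    by (simp add: norm_mult)
  also have "\<dots> \<le> 2 * gauss_tail 0 + exp (Im z ^ 2 - Re z ^ 2) * gauss_tail 0"
    using norm_tail_le[of "- z"] False by simp
  also have "\<dots> \<le> 2 * gauss_tail 0 * gauss_weight z"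
    using False gauss_tail_nonneg[of 0] by (simp add: gauss_weight_def algebra_simps)
  finally show ?thesis .
qed

end

lemma fG_entire_extension:
  obtains F where "F holomorphic_on UNIV" "\<And>x. F (of_real x) = of_real (fG x)"
    "has_gaussian_growth F"
proof -
  have "(\<lambda>z. exp (- (z^2))) holomorphic_on UNIV"
    by (intro holomorphic_intros)
  then obtain g :: "complex \<Rightarrow> complex"
    where "\<And>z. z \<in> UNIV \<Longrightarrow> (g has_field_derivative exp (- (z^2))) (at z within UNIV)"
    using holomorphic_convex_primitive'[OF convex_UNIV open_UNIV] by blast
  then interpret gauss_primitive g
    by unfold_locales simp
  define F where "F z = tail z / of_real (sqrt pi)" for z
  have fG0: "0 \<le> fG 0"
    by (simp add: fG_eq_gauss_tail gauss_tail_nonneg)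
  have bound: "norm (F z) \<le> 2 * fG 0 * (1 + norm z powr 0) * gauss_weight z" for z
  proof -
    have "norm (F z) \<le> 2 * fG 0 * gauss_weight z"
      using norm_tail_le_gauss_weight[of z]
      by (simp add: F_def fG_eq_gauss_tail norm_divide divide_right_mono)
    also have "\<dots> \<le> 2 * fG 0 * (1 + norm z powr 0) * gauss_weight z"
      using fG0 gauss_weight_nonneg[of z]
      by (intro mult_right_mono) (simp_all add: mult_le_cancel_left1)
    finally show ?thesis .
  qed
  have "F holomorphic_on UNIV"
    unfolding F_def using holomorphic_tail by (intro holomorphic_intros) auto
  moreover have "F (of_real x) = of_real (fG x)" for x
    by (simp add: F_def tail_of_real fG_eq_gauss_tail)
  moreover have "has_gaussian_growth F"
    unfolding has_gaussian_growth_def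
  proof (intro exI conjI allI)
    show "0 \<le> 2 * fG 0" using fG0 by simp
    show "norm (F z) \<le> 2 * fG 0 * (1 + norm z powr 0) * gauss_weight z" for z
      by (rule bound)
  qed simp
  ultimately show ?thesis by (rule that)
qed

lemma powr_le_one_plus_powr:
  fixes r :: real
  assumes "0 \<le> r" "0 \<le> p" "p \<le> q"
  shows "r powr p \<le> 1 + r powr q"
proof (cases "r \<le> 1")
  case True
  then have "r powr p \<le> 1"
    using assms by (intro powr_le1) auto
  then show ?thesis
    using powr_ge_zero[of r q] by linarith
next
  case False
  then have "r powr p \<le> r powr q"
    by (intro powr_mono[OF assms(3)]) simp
  then show ?thesis
    using powr_ge_zero[of r q] by linarith
qed

lemma power_le_one_plus_powr:
  fixes r :: real
  assumes "0 \<le> r" "real i \<le> q"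
  shows "r ^ i \<le> 1 + r powr q"
proof (cases "r = 0")
  case True
  then show ?thesis by (simp add: power_0_left)
next
  case False
  then show ?thesis
    using assms powr_le_one_plus_powr[of r "real i" q] by (simp add: powr_realpow)
qed

lemma norm_poly_le:
  fixes p :: "'a::real_normed_field poly"
  obtains D where "0 \<le> D" "\<And>z. norm (poly p z) \<le> D * (1 + norm z powr real (degree p))"
proof -
  define D where "D = (\<Sum>i\<le>degree p. norm (coeff p i))"
  have "0 \<le> D"
    unfolding D_def by (simp add: sum_nonneg)
  moreover have "norm (poly p z) \<le> D * (1 + norm z powr real (degree p))" for z :: 'a
  proof -
    have "norm (poly p z) \<le> (\<Sum>i\<le>degree p. norm (coeff p i * z ^ i))"
      unfolding poly_altdef by (rule norm_sum)
    also have "\<dots> \<le> (\<Sum>i\<le>degree p. norm (coeff p i) * (1 + norm z powr real (degree p)))"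
      by (intro sum_mono)
         (auto simp: norm_mult norm_power intro!: mult_left_mono power_le_one_plus_powr)
    also have "\<dots> = D * (1 + norm z powr real (degree p))"
      unfolding D_def by (simp add: sum_distrib_right)
    finally show ?thesis .
  qed
  ultimately show ?thesis by (rule that)
qed

lemma has_gaussian_growth_poly_mult_gauss:
  "has_gaussian_growth (\<lambda>z. poly p z * exp (- (z^2)))"
proof -
  obtain D where D: "0 \<le> D" "\<And>z. norm (poly p z) \<le> D * (1 + norm z powr real (degree p))"
    using norm_poly_le[of p] by blast
  have "norm (poly p z * exp (- (z^2))) \<le> D * (1 + norm z powr real (degree p)) * gauss_weight z"
    for z
    unfolding norm_mult norm_exp_minus_square
    using D exp_le_gauss_weight[of z] by (intro mult_mono) auto
  then show ?thesis
    unfolding has_gaussian_growth_def using D(1)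
    by (intro exI[of _ D] exI[of _ "real (degree p)"]) auto
qed

lemma has_gaussian_growth_add:
  assumes "has_gaussian_growth F" "has_gaussian_growth G"
  shows "has_gaussian_growth (\<lambda>z. F z + G z)"
proof -
  obtain C1 q1 where C1: "0 \<le> C1" "0 \<le> q1"
    and F: "\<And>z. norm (F z) \<le> C1 * (1 + norm z powr q1) * gauss_weight z"
    using assms(1) unfolding has_gaussian_growth_def by blast
  obtain C2 q2 where C2: "0 \<le> C2" "0 \<le> q2"
    and G: "\<And>z. norm (G z) \<le> C2 * (1 + norm z powr q2) * gauss_weight z"
    using assms(2) unfolding has_gaussian_growth_def by blast
  define q where "q = max q1 q2"
  have "norm (F z + G z) \<le> (2 * (C1 + C2)) * (1 + norm z powr q) * gauss_weight z" for z
  proof -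
    have le_q: "1 + norm z powr q' \<le> 2 + 2 * norm z powr q" if "0 \<le> q'" "q' \<le> q" for q'
      using powr_le_one_plus_powr[OF norm_ge_zero that, of z] powr_ge_zero[of "norm z" q]
      by linarith
    have "norm (F z + G z) \<le> C1 * (1 + norm z powr q1) * gauss_weight z
                              + C2 * (1 + norm z powr q2) * gauss_weight z"
      using norm_triangle_ineq[of "F z" "G z"] F[of z] G[of z] by linarith
    also have "\<dots> \<le> C1 * (2 + 2 * norm z powr q) * gauss_weight z
                     + C2 * (2 + 2 * norm z powr q) * gauss_weight z"
      using C1 C2 gauss_weight_nonneg[of z]
      by (intro le_q add_mono mult_right_mono mult_left_mono) (auto simp: q_def)
    also have "\<dots> = (2 * (C1 + C2)) * (1 + norm z powr q) * gauss_weight z"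
      by (simp add: algebra_simps)
    finally show ?thesis .
  qed
  moreover have "0 \<le> 2 * (C1 + C2)" "0 \<le> q"
    using C1 C2 by (auto simp: q_def)
  ultimately show ?thesis
    unfolding has_gaussian_growth_def by blast
qed

lemma has_gaussian_growth_imp_bound:
  assumes "has_gaussian_growth F"
  shows "\<exists>C q :: real. C \<ge> 0 \<and> q \<ge> 0 \<and>
           (\<forall>x y :: real. cmod (F (Complex x y)) \<le>
              (if x \<ge> 0 then C * (1 + (x^2 + y^2) powr q) * exp (y^2 - x^2)
               else C * (1 + (x^2 + y^2) powr q) * (1 + exp (y^2 - x^2))))"
proof -
  obtain C q where C: "0 \<le> C" "0 \<le> q"
    and bound: "\<And>z. norm (F z) \<le> C * (1 + norm z powr q) * gauss_weight z"
    using assms unfolding has_gaussian_growth_def by blast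
  have "norm (Complex x y) = (x^2 + y^2) powr (1/2)" for x y
    by (simp add: complex_norm powr_half_sqrt)
  then have "norm (Complex x y) powr q = (x^2 + y^2) powr (q / 2)" for x y
    by (simp add: powr_powr)
  then have "cmod (F (Complex x y)) \<le>
              (if x \<ge> 0 then C * (1 + (x^2 + y^2) powr (q / 2)) * exp (y^2 - x^2)
               else C * (1 + (x^2 + y^2) powr (q / 2)) * (1 + exp (y^2 - x^2)))" for x y
    using bound[of "Complex x y"] by (cases "0 \<le> x") (simp_all add: gauss_weight_def)
  then show ?thesis
    using C by (intro exI[of _ C] exI[of _ "q / 2"]) auto
qed

lemma poly_map_poly_of_real:
  "poly (map_poly of_real p) (of_real x) = (of_real (poly p x) :: 'a::{comm_ring_1,real_algebra_1})"
  by (induction p) (auto simp: map_poly_pCons)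

lemma gaussian_type_smearing_poly_form:
  assumes "gaussian_type_smearing f"
  obtains p where "f = (\<lambda>x. fG x + poly p x * exp (- (x^2)))"
proof -
  consider "f = fG" | N where "f = fMP N" | a where "f = fcs a"
    using assms unfolding gaussian_type_smearing_def by blast
  then show ?thesis
  proof cases
    case 1
    then show ?thesis using that[of 0] by auto
  next
    case (2 N)
    show ?thesis
      by (rule that[of "\<Sum>n = 1..N. smult (mpA n) (hermite (2 * n - 1))"])
         (auto simp: 2 fMP_def poly_sum sum_distrib_right)
  next
    case (3 a)
    show ?thesis
      by (rule that[of "smult (1 / (4 * sqrt pi)) (smult (- a) (hermite 2) + hermite 1)"])
         (auto simp: 3 fcs_def algebra_simps)
  qed
qed

theorem lemmaA7:
  fixes f :: "real \<Rightarrow> real"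
  assumes "gaussian_type_smearing f"
  shows "\<exists>F :: complex \<Rightarrow> complex. F holomorphic_on UNIV \<and>
           (\<forall>x::real. F (complex_of_real x) = complex_of_real (f x)) \<and>
           (\<exists>C q :: real. C \<ge> 0 \<and> q \<ge> 0 \<and>
              (\<forall>x y :: real. cmod (F (Complex x y)) \<le>
                 (if x \<ge> 0 then C * (1 + (x^2 + y^2) powr q) * exp (y^2 - x^2)
                  else C * (1 + (x^2 + y^2) powr q) * (1 + exp (y^2 - x^2)))))"
proof -
  obtain p where f: "f = (\<lambda>x. fG x + poly p x * exp (- (x^2)))"
    using gaussian_type_smearing_poly_form[OF assms] .
  obtain G where G: "G holomorphic_on UNIV" "\<And>x. G (of_real x) = of_real (fG x)"
    "has_gaussian_growth G"
    using fG_entire_extension by blast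
  define F where "F z = G z + poly (map_poly of_real p) z * exp (- (z^2))" for z
  have "F holomorphic_on UNIV"
    unfolding F_def using G(1) by (intro holomorphic_intros) auto
  moreover have "\<forall>x. F (of_real x) = of_real (f x)"
    by (simp add: F_def f G(2) poly_map_poly_of_real flip: exp_of_real)
  moreover have "has_gaussian_growth F"
    unfolding F_def by (intro has_gaussian_growth_add G(3) has_gaussian_growth_poly_mult_gauss)
  ultimately show ?thesis
    using has_gaussian_growth_imp_bound by blast
qed

end
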